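(* Suppose $f$ satisfies the separation property. Let $x\in\widetilde X$ with itinerary $\theta$, $t\geqslant0$, $n\geqslant 1$ and $(i_1,\dots,i_n)\in\{1,\dots,N\}^n$. Then $\theta_t\theta_{t+1}\dots\theta_{t+n-1}=i_1\dots i_n$ if and only if $f^{t+n}(x)\in A_{i_1\dots i_n}$.
   Context: Let $(X,d)$ be a compact metric space, $X_1,\dots,X_N$ ($N\geqslant 2$) non-empty pairwise disjoint open subsets with $X=\bigcup_i\overline{X_i}$, $\Delta:=\{x\in\overline{X_i}\cap\overline{X_j}:i\neq j\}$, and $f:X\to X$ a map such that each $f|_{X_i}$ admits a continuous extension $f_i:\overline{X_i}\to X$. Separation property: each $f_i$ injective and $f_i(\overline{X_i})\cap f_j(\overline{X_j})=\emptyset$ for $i\neq j$. $\widetilde X:=\bigcap_{n\geqslant 0}f^{-n}(X\setminus\Delta)$; the itinerary of $x\in\widetilde X$ is $\theta$ with $\theta_t=i$ iff $f^t(x)\in X_i$. For $A\subset X$ let $F_i(A):=\overline{f(A\cap X_i)}$ and $A_{i_1\dots i_n}:=F_{i_n}\circ\dots\circ F_{i_1}(X)$. *)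

theory Defs
  imports "HOL-Analysis.Analysis"
begin

definition setting ::
  "'a::metric_space set \<Rightarrow> nat \<Rightarrow> (nat \<Rightarrow> 'a set) \<Rightarrow> ('a \<Rightarrow> 'a) \<Rightarrow> (nat \<Rightarrow> 'a \<Rightarrow> 'a) \<Rightarrow> bool" where
  "setting X N Xs f fs \<longleftrightarrow>
     compact X \<and> N \<ge> 2 \<and>
     (\<forall>i\<in>{1..N}. Xs i \<noteq> {} \<and> openin (top_of_set X) (Xs i)) \<and>
     (\<forall>i\<in>{1..N}. \<forall>j\<in>{1..N}. i \<noteq> j \<longrightarrow> Xs i \<inter> Xs j = {}) \<and>
     X = (\<Union>i\<in>{1..N}. closure (Xs i)) \<and>
     f ` X \<subseteq> X \<and>
     (\<forall>i\<in>{1..N}. continuous_on (closure (Xs i)) (fs i) \<and>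
                  fs i ` closure (Xs i) \<subseteq> X \<and>
                  (\<forall>x\<in>Xs i. fs i x = f x))"

definition separation ::
  "nat \<Rightarrow> (nat \<Rightarrow> 'a::metric_space set) \<Rightarrow> (nat \<Rightarrow> 'a \<Rightarrow> 'a) \<Rightarrow> bool" where
  "separation N Xs fs \<longleftrightarrow>
     (\<forall>i\<in>{1..N}. inj_on (fs i) (closure (Xs i))) \<and>
     (\<forall>i\<in>{1..N}. \<forall>j\<in>{1..N}. i \<noteq> j \<longrightarrow>
        fs i ` closure (Xs i) \<inter> fs j ` closure (Xs j) = {})"

definition Delta :: "nat \<Rightarrow> (nat \<Rightarrow> 'a::metric_space set) \<Rightarrow> 'a set" where
  "Delta N Xs = {x. \<exists>i\<in>{1..N}. \<exists>j\<in>{1..N}. i \<noteq> j \<and> x \<in> closure (Xs i) \<inter> closure (Xs j)}"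

definition Xtilde :: "'a::metric_space set \<Rightarrow> nat \<Rightarrow> (nat \<Rightarrow> 'a set) \<Rightarrow> ('a \<Rightarrow> 'a) \<Rightarrow> 'a set" where
  "Xtilde X N Xs f = {x \<in> X. \<forall>n. (f ^^ n) x \<in> X - Delta N Xs}"

definition itinerary :: "nat \<Rightarrow> (nat \<Rightarrow> 'a set) \<Rightarrow> ('a \<Rightarrow> 'a) \<Rightarrow> 'a \<Rightarrow> (nat \<Rightarrow> nat) \<Rightarrow> bool" where
  "itinerary N Xs f x \<theta> \<longleftrightarrow>
     (\<forall>t. \<theta> t \<in> {1..N} \<and> (\<forall>i\<in>{1..N}. \<theta> t = i \<longleftrightarrow> (f ^^ t) x \<in> Xs i))"

definition Fmap :: "('a::metric_space \<Rightarrow> 'a) \<Rightarrow> (nat \<Rightarrow> 'a set) \<Rightarrow> nat \<Rightarrow> 'a set \<Rightarrow> 'a set" where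
  "Fmap f Xs i A = closure (f ` (A \<inter> Xs i))"

text \<open>A_{i_1...i_n} = F_{i_n} o ... o F_{i_1} (X); the word is a list [i_1,...,i_n].\<close>
definition Aword :: "'a::metric_space set \<Rightarrow> ('a \<Rightarrow> 'a) \<Rightarrow> (nat \<Rightarrow> 'a set) \<Rightarrow> nat list \<Rightarrow> 'a set" where
  "Aword X f Xs ws = foldl (\<lambda>A i. Fmap f Xs i A) X ws"

end

theory Submission
  imports Defs
begin

text \<open>By induction on the word: since \<open>A\<^bsub>w\<^esub>\<close> is closed and \<open>f\<^sub>i\<close> is continuous on the
  compact set \<open>closure (X\<^sub>i)\<close>, \<open>F\<^sub>i(A\<^bsub>w\<^esub>) = f\<^sub>i(closure (A\<^bsub>w\<^esub> \<inter> X\<^sub>i))\<close> with no further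
  closure. If \<open>y = f\<^sup>t\<^sup>+\<^sup>m(x) \<in> X\<^sub>j\<close>, then \<open>f(y) = f\<^sub>j(y)\<close> lies in \<open>F\<^sub>i(A\<^bsub>w\<^esub>)\<close> only if
  \<open>j = i\<close> (disjoint images) and \<open>y \<in> A\<^bsub>w\<^esub>\<close> (injectivity of \<open>f\<^sub>i\<close>).\<close>

lemma setting_compact_closure_region:
  assumes "setting X N Xs f fs" and "i \<in> {1..N}"
  shows "compact (closure (Xs i))"
proof -
  from assms have "compact X" and "openin (top_of_set X) (Xs i)"
    unfolding setting_def by blast+
  then have "closure (Xs i) \<subseteq> X"
    by (meson closure_minimal compact_imp_closed openin_imp_subset)
  then show ?thesis
    using \<open>compact X\<close> by (metis closed_closure compact_Int_closed inf.absorb_iff2)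
qed

lemma Fmap_eq_image_closure:
  assumes S: "setting X N Xs f fs" and i: "i \<in> {1..N}"
  shows "Fmap f Xs i A = fs i ` closure (A \<inter> Xs i)"
proof -
  from S i have cont: "continuous_on (closure (Xs i)) (fs i)"
    and agree: "\<forall>x\<in>Xs i. fs i x = f x" unfolding setting_def by blast+
  have f_fs: "f ` (A \<inter> Xs i) = fs i ` (A \<inter> Xs i)"
    using agree by (auto simp: image_def)
  have sub: "closure (A \<inter> Xs i) \<subseteq> closure (Xs i)" by (simp add: closure_mono)
  have cont': "continuous_on (closure (A \<inter> Xs i)) (fs i)"
    using continuous_on_subset[OF cont sub] .
  have "compact (closure (A \<inter> Xs i))"
    using setting_compact_closure_region[OF S i] sub
    by (metis closed_closure compact_Int_closed inf.absorb_iff2)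
  then have closed_image: "closed (fs i ` closure (A \<inter> Xs i))"
    using compact_continuous_image[OF cont'] compact_imp_closed by blast
  have "closure (fs i ` (A \<inter> Xs i)) \<subseteq> fs i ` closure (A \<inter> Xs i)"
    by (rule closure_minimal[OF _ closed_image]) (intro image_mono closure_subset)
  moreover have "fs i ` closure (A \<inter> Xs i) \<subseteq> closure (fs i ` (A \<inter> Xs i))"
    by (rule image_closure_subset[OF cont' closed_closure closure_subset])
  ultimately show ?thesis
    unfolding Fmap_def f_fs by blast
qed

lemma Aword_snoc: "Aword X f Xs (ws @ [i]) = Fmap f Xs i (Aword X f Xs ws)"
  by (simp add: Aword_def)

lemma Aword_closed:
  assumes "setting X N Xs f fs"
  shows "closed (Aword X f Xs ws)"
proof (cases ws rule: rev_exhaust)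
  case Nil
  have "compact X" using assms unfolding setting_def by blast
  with Nil show ?thesis by (simp add: Aword_def compact_imp_closed)
next
  case (snoc ws' i)
  then show ?thesis by (simp add: Aword_snoc Fmap_def)
qed

lemma image_mem_Fmap_iff:
  assumes S: "setting X N Xs f fs" and sep: "separation N Xs fs"
    and i: "i \<in> {1..N}" and j: "j \<in> {1..N}" and y: "y \<in> Xs j"
    and A: "closed A"
  shows "f y \<in> Fmap f Xs i A \<longleftrightarrow> j = i \<and> y \<in> A"
proof
  assume "j = i \<and> y \<in> A"
  with y show "f y \<in> Fmap f Xs i A"
    unfolding Fmap_def by (blast intro: closure_subset[THEN subsetD])
next
  assume "f y \<in> Fmap f Xs i A"
  then obtain z where z: "z \<in> closure (A \<inter> Xs i)" and fz: "f y = fs i z"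
    unfolding Fmap_eq_image_closure[OF S i] by blast
  have z_reg: "z \<in> closure (Xs i)" and z_A: "z \<in> A"
    using z closure_mono[of "A \<inter> Xs i"] closure_minimal[OF _ A, of "A \<inter> Xs i"] by auto
  have y_reg: "y \<in> closure (Xs j)" using y closure_subset by blast
  have fy: "f y = fs j y" using S j y unfolding setting_def by metis
  have "f y \<in> fs j ` closure (Xs j) \<inter> fs i ` closure (Xs i)"
    using fy fz y_reg z_reg by blast
  then have ji: "j = i" using sep i j unfolding separation_def by blast
  have "inj_on (fs i) (closure (Xs i))" using sep i unfolding separation_def by blast
  then have "y = z" using fy fz ji y_reg z_reg by (metis inj_onD)
  with ji z_A show "j = i \<and> y \<in> A" by blast
qed

lemma itinerary_block_iff_mem_Aword:
  assumes S: "setting X N Xs f fs" and sep: "separation N Xs fs"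
    and x: "x \<in> Xtilde X N Xs f" and it: "itinerary N Xs f x \<theta>"
    and ws: "set ws \<subseteq> {1..N}"
  shows "map \<theta> [t..<t + length ws] = ws \<longleftrightarrow> (f ^^ (t + length ws)) x \<in> Aword X f Xs ws"
  using ws
proof (induction ws rule: rev_induct)
  case Nil
  then show ?case using x by (simp add: Xtilde_def Aword_def)
next
  case (snoc i ws)
  then have i: "i \<in> {1..N}" and ws: "set ws \<subseteq> {1..N}" by auto
  define y where "y = (f ^^ (t + length ws)) x"
  have j: "\<theta> (t + length ws) \<in> {1..N}" and y_reg: "y \<in> Xs (\<theta> (t + length ws))"
    using it unfolding itinerary_def y_def by blast+
  have "map \<theta> [t..<t + length (ws @ [i])] = ws @ [i]
        \<longleftrightarrow> map \<theta> [t..<t + length ws] = ws \<and> \<theta> (t + length ws) = i"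
    by simp
  also have "\<dots> \<longleftrightarrow> \<theta> (t + length ws) = i \<and> y \<in> Aword X f Xs ws"
    using snoc.IH[OF ws] by (auto simp: y_def)
  also have "\<dots> \<longleftrightarrow> f y \<in> Aword X f Xs (ws @ [i])"
    unfolding Aword_snoc
    using image_mem_Fmap_iff[OF S sep i j y_reg Aword_closed[OF S]] by simp
  also have "f y = (f ^^ (t + length (ws @ [i]))) x"
    by (simp add: y_def)
  finally show ?case .
qed

theorem corollary1:
  fixes X :: "'a::metric_space set" and N :: nat and Xs :: "nat \<Rightarrow> 'a set"
    and f :: "'a \<Rightarrow> 'a" and fs :: "nat \<Rightarrow> 'a \<Rightarrow> 'a"
    and x :: 'a and \<theta> :: "nat \<Rightarrow> nat" and t n :: nat and ws :: "nat list"
  assumes "setting X N Xs f fs"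
    and "separation N Xs fs"
    and "x \<in> Xtilde X N Xs f"
    and "itinerary N Xs f x \<theta>"
    and "n \<ge> 1" and "length ws = n" and "set ws \<subseteq> {1..N}"
  shows "map \<theta> [t..<t+n] = ws \<longleftrightarrow> (f ^^ (t + n)) x \<in> Aword X f Xs ws"
  using itinerary_block_iff_mem_Aword[OF assms(1-4) assms(7), of t] assms(6) by simp

end
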